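(* Let $S$ be a finite alphabet and let $U,V,W$ be finite sets of words over $S$. Let $L$ be a language over $S$ such that every element of $L$ has the form $ac^nb$ with $a\in U$, $b\in V$, $c\in W$, $n\ge 0$. Then $L$ is a regular language if and only if for every $a\in U$, $b\in V$, $c\in W$ the set $$N_{a,b,c}=\{n\in\mathbb Z_{\ge 0}\mid ac^nb\in L\}$$ is the union of a finite set and finitely many one-sided arithmetic progressions $\{\alpha+t\beta\mid t\ge 0\}$.
   Context: A regular language is one recognized by a finite automaton (equivalently, described by a regular expression). *)

theory Defs
  imports Main
begin

definition lang_conc :: "'a list set \<Rightarrow> 'a list set \<Rightarrow> 'a list set" where
  "lang_conc A B = {u @ v | u v. u \<in> A \<and> v \<in> B}"

inductive_set lang_star :: "'a list set \<Rightarrow> 'a list set" for A where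
  star_nil: "[] \<in> lang_star A"
| star_app: "u \<in> A \<Longrightarrow> v \<in> lang_star A \<Longrightarrow> u @ v \<in> lang_star A"

text \<open>Regular languages over the alphabet S: the languages denoted by regular
  expressions over S (Kleene's theorem: equivalently, recognised by finite automata).\<close>
inductive_set regular_lang :: "'a set \<Rightarrow> 'a list set set" for S where
  reg_empty: "{} \<in> regular_lang S"
| reg_eps: "{[]} \<in> regular_lang S"
| reg_letter: "s \<in> S \<Longrightarrow> {[s]} \<in> regular_lang S"
| reg_union: "A \<in> regular_lang S \<Longrightarrow> B \<in> regular_lang S \<Longrightarrow> A \<union> B \<in> regular_lang S"
| reg_conc: "A \<in> regular_lang S \<Longrightarrow> B \<in> regular_lang S \<Longrightarrow> lang_conc A B \<in> regular_lang S"
| reg_star: "A \<in> regular_lang S \<Longrightarrow> lang_star A \<in> regular_lang S"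

definition word_pow :: "'a list \<Rightarrow> nat \<Rightarrow> 'a list" where
  "word_pow c n = concat (replicate n c)"

definition arith_prog :: "nat \<Rightarrow> nat \<Rightarrow> nat set" where
  "arith_prog \<alpha> \<beta> = {\<alpha> + t * \<beta> | t. True}"

definition fin_union_aps :: "nat set \<Rightarrow> bool" where
  "fin_union_aps N \<longleftrightarrow> (\<exists>F P. finite F \<and> finite P \<and>
      N = F \<union> (\<Union>(\<alpha>, \<beta>)\<in>P. arith_prog \<alpha> \<beta>))"

end

theory Submission
  imports Defs
begin

text \<open>A regular language has only finitely many left quotients. The quotients of \<open>L\<close> by
  \<open>a c\<^sup>n\<close> are obtained from each other by quotienting by \<open>c\<close>, so they repeat with some period
  \<open>p\<close> from some index \<open>i\<close> on; since \<open>a c\<^sup>n b \<in> L\<close> iff \<open>b\<close> lies in that quotient, the set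
  \<open>N\<^sub>a\<^sub>,\<^sub>b\<^sub>,\<^sub>c\<close> is periodic beyond \<open>i\<close>, i.e. a finite set plus \<open>p\<close> progressions of difference \<open>p\<close>.
  Conversely the words \<open>a c\<^sup>n b\<close> with \<open>n \<in> {\<alpha> + t\<beta>}\<close> form the regular language
  \<open>a c\<^sup>\<alpha> (c\<^sup>\<beta>)\<^sup>* b\<close>, and \<open>L\<close> is the finite union of such languages and of single words.\<close>

definition lquot :: "'a list \<Rightarrow> 'a list set \<Rightarrow> 'a list set" where
  "lquot u A = {x. u @ x \<in> A}"

definition lquots :: "'a list set \<Rightarrow> 'a list set set" where
  "lquots A = range (\<lambda>u. lquot u A)"

subsection \<open>Regular languages have finitely many left quotients\<close>

lemma lang_concI: "x = y @ z \<Longrightarrow> y \<in> A \<Longrightarrow> z \<in> B \<Longrightarrow> x \<in> lang_conc A B"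
  unfolding lang_conc_def by blast

lemma lang_concE:
  "x \<in> lang_conc A B \<Longrightarrow> (\<And>y z. x = y @ z \<Longrightarrow> y \<in> A \<Longrightarrow> z \<in> B \<Longrightarrow> P) \<Longrightarrow> P"
  unfolding lang_conc_def by blast

lemma lang_star_append: "v \<in> lang_star A \<Longrightarrow> z \<in> lang_star A \<Longrightarrow> v @ z \<in> lang_star A"
  by (induction v rule: lang_star.induct) (simp_all add: lang_star.star_app)

lemma lquot_lang_conc:
  "lquot u (lang_conc A B) = lang_conc (lquot u A) B \<union> \<Union>{lquot w B | w. \<exists>v. u = v @ w \<and> v \<in> A}"
proof (rule set_eqI, rule iffI)
  fix x assume "x \<in> lquot u (lang_conc A B)"
  then obtain p q where pq: "u @ x = p @ q" "p \<in> A" "q \<in> B"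
    unfolding lquot_def lang_conc_def by blast
  from pq(1) consider us where "u = p @ us" "us @ x = q" | us where "u @ us = p" "x = us @ q"
    using append_eq_append_conv2[of u x p q] by blast
  then show "x \<in> lang_conc (lquot u A) B \<union> \<Union>{lquot w B | w. \<exists>v. u = v @ w \<and> v \<in> A}"
  proof cases
    case 1
    then show ?thesis using pq by (auto simp: lquot_def)
  next
    case 2
    then show ?thesis using pq by (auto simp: lquot_def intro: lang_concI)
  qed
next
  fix x assume "x \<in> lang_conc (lquot u A) B \<union> \<Union>{lquot w B | w. \<exists>v. u = v @ w \<and> v \<in> A}"
  then show "x \<in> lquot u (lang_conc A B)"
  proof
    assume "x \<in> lang_conc (lquot u A) B"
    then obtain y z where "x = y @ z" "u @ y \<in> A" "z \<in> B"
      by (auto simp: lquot_def elim: lang_concE)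
    then show ?thesis unfolding lquot_def by (metis append.assoc lang_concI mem_Collect_eq)
  next
    assume "x \<in> \<Union>{lquot w B | w. \<exists>v. u = v @ w \<and> v \<in> A}"
    then obtain v w where "u = v @ w" "v \<in> A" "w @ x \<in> B" by (auto simp: lquot_def)
    then show ?thesis by (auto simp: lquot_def intro: lang_concI)
  qed
qed

lemma lang_star_split_prefix:
  assumes "u @ x \<in> lang_star A" and "u \<noteq> []"
  shows "\<exists>v w y z. u = v @ w \<and> v \<in> lang_star A \<and> w \<noteq> [] \<and> w @ y \<in> A \<and> x = y @ z
    \<and> z \<in> lang_star A"
proof -
  have "s \<in> lang_star A \<Longrightarrow> s = u @ x \<Longrightarrow> u \<noteq> [] \<Longrightarrow> \<exists>v w y z. u = v @ w \<and> v \<in> lang_star A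
    \<and> w \<noteq> [] \<and> w @ y \<in> A \<and> x = y @ z \<and> z \<in> lang_star A" for s
  proof (induction arbitrary: u x rule: lang_star.induct)
    case star_nil
    then show ?case by simp
  next
    case (star_app p q)
    from star_app.prems(1) consider us where "u = p @ us" "us @ x = q"
      | us where "u @ us = p" "x = us @ q"
      using append_eq_append_conv2[of u x p q] by auto
    then show ?case
    proof cases
      case 1
      show ?thesis
      proof (cases "us = []")
        case True
        then show ?thesis using 1 star_app lang_star.star_nil
          by (metis append.right_neutral append_Nil)
      next
        case False
        from star_app.IH[OF 1(2)[symmetric] False] obtain v w y z where
          "us = v @ w" "v \<in> lang_star A" "w \<noteq> []" "w @ y \<in> A" "x = y @ z" "z \<in> lang_star A"
          by blast
        moreover have "p @ v \<in> lang_star A" using star_app.hyps(1) \<open>v \<in> lang_star A\<close>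
          by (rule lang_star.star_app)
        ultimately show ?thesis using 1 by (metis append.assoc)
      qed
    next
      case 2
      then show ?thesis using star_app lang_star.star_nil by (metis append_Nil)
    qed
  qed
  then show ?thesis using assms by blast
qed

lemma lquot_lang_star:
  assumes "u \<noteq> []"
  shows "lquot u (lang_star A) =
    \<Union>{lang_conc (lquot w A) (lang_star A) | w. \<exists>v. u = v @ w \<and> v \<in> lang_star A \<and> w \<noteq> []}"
proof (rule set_eqI, rule iffI)
  fix x assume "x \<in> lquot u (lang_star A)"
  then obtain v w y z where
    h: "u = v @ w" "v \<in> lang_star A" "w \<noteq> []" "w @ y \<in> A" "x = y @ z" "z \<in> lang_star A"
    using lang_star_split_prefix[of u x A] assms by (auto simp: lquot_def)
  then have "x \<in> lang_conc (lquot w A) (lang_star A)"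
    by (auto simp: lquot_def intro: lang_concI)
  then show "x \<in> \<Union>{lang_conc (lquot w A) (lang_star A) | w. \<exists>v. u = v @ w \<and> v \<in> lang_star A \<and> w \<noteq> []}"
    using h by blast
next
  fix x
  assume "x \<in> \<Union>{lang_conc (lquot w A) (lang_star A) | w. \<exists>v. u = v @ w \<and> v \<in> lang_star A \<and> w \<noteq> []}"
  then obtain v w y z where
    h: "u = v @ w" "v \<in> lang_star A" "x = y @ z" "w @ y \<in> A" "z \<in> lang_star A"
    by (auto simp: lquot_def elim!: lang_concE)
  then have "v @ ((w @ y) @ z) \<in> lang_star A"
    by (intro lang_star_append lang_star.star_app)
  then show "x \<in> lquot u (lang_star A)" using h by (simp add: lquot_def)
qed

lemma finite_lquots_letter: "finite (lquots {[s]})"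
proof -
  have "lquots {[s]} \<subseteq> {{[s]}, {[]}, {}}"
  proof
    fix Q assume "Q \<in> lquots {[s]}"
    then obtain u where u: "Q = lquot u {[s]}" by (auto simp: lquots_def)
    show "Q \<in> {{[s]}, {[]}, {}}"
      by (cases u) (auto simp: u lquot_def)
  qed
  then show ?thesis by (rule finite_subset) simp
qed

lemma finite_lquots_Un:
  assumes "finite (lquots A)" and "finite (lquots B)"
  shows "finite (lquots (A \<union> B))"
proof -
  have "lquots (A \<union> B) \<subseteq> (\<lambda>(X, Y). X \<union> Y) ` (lquots A \<times> lquots B)"
  proof
    fix Q assume "Q \<in> lquots (A \<union> B)"
    then obtain u where "Q = lquot u (A \<union> B)" by (auto simp: lquots_def)
    then have "Q = (\<lambda>(X, Y). X \<union> Y) (lquot u A, lquot u B)" by (auto simp: lquot_def)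
    then show "Q \<in> (\<lambda>(X, Y). X \<union> Y) ` (lquots A \<times> lquots B)"
      by (auto simp: lquots_def)
  qed
  then show ?thesis by (rule finite_subset) (simp add: assms)
qed

lemma finite_lquots_lang_conc:
  assumes "finite (lquots A)" and "finite (lquots B)"
  shows "finite (lquots (lang_conc A B))"
proof -
  have "lquots (lang_conc A B) \<subseteq> (\<lambda>(X, T). lang_conc X B \<union> \<Union>T) ` (lquots A \<times> Pow (lquots B))"
  proof
    fix Q assume "Q \<in> lquots (lang_conc A B)"
    then obtain u where u: "Q = lquot u (lang_conc A B)" by (auto simp: lquots_def)
    have "(lquot u A, {lquot w B | w. \<exists>v. u = v @ w \<and> v \<in> A}) \<in> lquots A \<times> Pow (lquots B)"
      by (auto simp: lquots_def)
    moreover have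
      "Q = (\<lambda>(X, T). lang_conc X B \<union> \<Union>T) (lquot u A, {lquot w B | w. \<exists>v. u = v @ w \<and> v \<in> A})"
      unfolding u lquot_lang_conc by simp
    ultimately show "Q \<in> (\<lambda>(X, T). lang_conc X B \<union> \<Union>T) ` (lquots A \<times> Pow (lquots B))"
      by blast
  qed
  then show ?thesis by (rule finite_subset) (simp add: assms)
qed

lemma finite_lquots_lang_star:
  assumes "finite (lquots A)"
  shows "finite (lquots (lang_star A))"
proof -
  define G where "G T = (\<Union>X\<in>T. lang_conc X (lang_star A))" for T
  have "lquots (lang_star A) \<subseteq> insert (lang_star A) (G ` Pow (lquots A))"
  proof
    fix Q assume "Q \<in> lquots (lang_star A)"
    then obtain u where u: "Q = lquot u (lang_star A)" by (auto simp: lquots_def)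
    show "Q \<in> insert (lang_star A) (G ` Pow (lquots A))"
    proof (cases "u = []")
      case True
      then show ?thesis using u by (simp add: lquot_def)
    next
      case False
      define Ws where "Ws = {w. \<exists>v. u = v @ w \<and> v \<in> lang_star A \<and> w \<noteq> []}"
      have "Q = G ((\<lambda>w. lquot w A) ` Ws)"
        unfolding u lquot_lang_star[OF False] G_def Ws_def by blast
      moreover have "(\<lambda>w. lquot w A) ` Ws \<in> Pow (lquots A)"
        by (auto simp: lquots_def)
      ultimately show ?thesis by simp
    qed
  qed
  then show ?thesis by (rule finite_subset) (simp add: assms)
qed

lemma finite_lquots_if_regular: "A \<in> regular_lang S \<Longrightarrow> finite (lquots A)"
proof (induction rule: regular_lang.induct)
  case reg_empty
  have "lquots {} \<subseteq> {{}}" by (auto simp: lquots_def lquot_def)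
  then show ?case by (rule finite_subset) simp
next
  case reg_eps
  have "lquots {[]} \<subseteq> {{[]}, {}}" by (auto simp: lquots_def lquot_def)
  then show ?case by (rule finite_subset) simp
next
  case (reg_letter s)
  show ?case by (rule finite_lquots_letter)
next
  case (reg_union A B)
  show ?case using reg_union.IH by (rule finite_lquots_Un)
next
  case (reg_conc A B)
  show ?case using reg_conc.IH by (rule finite_lquots_lang_conc)
next
  case (reg_star A)
  show ?case using reg_star.IH by (rule finite_lquots_lang_star)
qed

subsection \<open>Eventually periodic sets of naturals\<close>

lemma eventually_periodic_if_finite_range:
  fixes f :: "nat \<Rightarrow> 'b"
  assumes iterate: "\<And>n. f (Suc n) = g (f n)" and fin: "finite (range f)"
  obtains p i where "p > 0" and "\<And>n. i \<le> n \<Longrightarrow> f (n + p) = f n"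
proof -
  have "\<not> inj f" using fin by (metis finite_imageD infinite_UNIV_nat)
  then obtain i j where "i < j" "f i = f j"
    unfolding inj_def by (metis linorder_neq_iff)
  have "f (n + (j - i)) = f n" if "i \<le> n" for n
    using that
  proof (induction n rule: dec_induct)
    case base
    show ?case using \<open>i < j\<close> \<open>f i = f j\<close> by simp
  next
    case (step n)
    then show ?case by (simp add: iterate)
  qed
  show ?thesis
  proof (rule that)
    show "j - i > 0" using \<open>i < j\<close> by simp
    show "f (n + (j - i)) = f n" if "i \<le> n" for n using that by fact
  qed
qed

lemma fin_union_aps_if_eventually_periodic:
  assumes "p > 0" and periodic: "\<And>n. i \<le> n \<Longrightarrow> n + p \<in> N \<longleftrightarrow> n \<in> N"
  shows "fin_union_aps N"
proof -
  have shift: "r + t * p \<in> N \<longleftrightarrow> r \<in> N" if "i \<le> r" for r t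
  proof (induction t)
    case 0
    show ?case by simp
  next
    case (Suc t)
    have "r + Suc t * p \<in> N \<longleftrightarrow> (r + t * p) + p \<in> N" by (simp add: algebra_simps)
    also have "\<dots> \<longleftrightarrow> r + t * p \<in> N" using that by (intro periodic) simp
    finally show ?case using Suc.IH by simp
  qed
  define F where "F = {n \<in> N. n < i}"
  define P where "P = (\<lambda>r. (r, p)) ` {r \<in> N. i \<le> r \<and> r < i + p}"
  have "N = F \<union> (\<Union>(\<alpha>, \<beta>)\<in>P. arith_prog \<alpha> \<beta>)"
  proof (rule set_eqI, rule iffI)
    fix n assume n: "n \<in> N"
    show "n \<in> F \<union> (\<Union>(\<alpha>, \<beta>)\<in>P. arith_prog \<alpha> \<beta>)"
    proof (cases "n < i")
      case True
      then show ?thesis using n by (simp add: F_def)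
    next
      case False
      define r where "r = i + (n - i) mod p"
      have n_eq: "n = r + (n - i) div p * p"
        using False by (simp add: r_def)
      have "r \<in> N" using n shift[of r "(n - i) div p"] n_eq by (simp add: r_def)
      moreover have "r < i + p" using \<open>p > 0\<close> by (simp add: r_def)
      ultimately have "(r, p) \<in> P" by (auto simp: P_def r_def)
      moreover have "n \<in> arith_prog r p" using n_eq by (auto simp: arith_prog_def)
      ultimately show ?thesis by blast
    qed
  next
    fix n assume "n \<in> F \<union> (\<Union>(\<alpha>, \<beta>)\<in>P. arith_prog \<alpha> \<beta>)"
    then show "n \<in> N"
      by (auto simp: F_def P_def arith_prog_def shift)
  qed
  moreover have "finite F" "finite P" by (auto simp: F_def P_def)
  ultimately show ?thesis unfolding fin_union_aps_def by blast
qed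

lemma word_pow_add: "word_pow c (m + n) = word_pow c m @ word_pow c n"
  by (simp add: word_pow_def replicate_add)

lemma word_pow_Suc: "word_pow c (Suc n) = c @ word_pow c n"
  by (simp add: word_pow_def)

lemma word_pow_Suc_right: "word_pow c (Suc n) = word_pow c n @ c"
  using word_pow_add[of c n 1] by (simp add: word_pow_def)

lemma word_pow_mult: "word_pow c (t * \<beta>) = word_pow (word_pow c \<beta>) t"
  by (induction t) (simp_all add: word_pow_add word_pow_Suc, simp add: word_pow_def)

lemma lang_star_singleton: "lang_star {w} = range (word_pow w)"
proof
  show "lang_star {w} \<subseteq> range (word_pow w)"
  proof
    fix x assume "x \<in> lang_star {w}"
    then show "x \<in> range (word_pow w)"
    proof (induction rule: lang_star.induct)
      case star_nil
      show ?case by (rule range_eqI[of _ _ 0]) (simp add: word_pow_def)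
    next
      case (star_app u v)
      then obtain n where "v = word_pow w n" by auto
      then show ?case using star_app by (intro range_eqI[of _ _ "Suc n"]) (simp add: word_pow_Suc)
    qed
  qed
next
  have "word_pow w n \<in> lang_star {w}" for n
    by (induction n) (simp_all add: word_pow_Suc lang_star.intros, simp add: word_pow_def lang_star.star_nil)
  then show "range (word_pow w) \<subseteq> lang_star {w}" by blast
qed

subsection \<open>Blocks of words \<open>a c\<^sup>n b\<close>\<close>

lemma fin_union_aps_if_finite_lquots:
  assumes "finite (lquots L)"
  shows "fin_union_aps {n. a @ word_pow c n @ b \<in> L}"
proof -
  define f where "f n = lquot (a @ word_pow c n) L" for n
  have iterate: "f (Suc n) = lquot c (f n)" for n
    by (simp add: f_def lquot_def word_pow_Suc_right)
  have fin: "finite (range f)"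
    using assms by (rule finite_subset[rotated]) (auto simp: f_def lquots_def)
  obtain p i where "p > 0" and periodic: "\<And>n. i \<le> n \<Longrightarrow> f (n + p) = f n"
    using eventually_periodic_if_finite_range[OF iterate fin] by blast
  have "a @ word_pow c n @ b \<in> L \<longleftrightarrow> b \<in> f n" for n
    by (simp add: f_def lquot_def)
  with \<open>p > 0\<close> show ?thesis
    by (intro fin_union_aps_if_eventually_periodic[of p i]) (simp_all add: periodic)
qed

lemma regular_lang_singleton: "w \<in> lists S \<Longrightarrow> {w} \<in> regular_lang S"
proof (induction w)
  case Nil
  show ?case by (rule reg_eps)
next
  case (Cons x w)
  have "{x # w} = lang_conc {[x]} {w}" by (auto simp: lang_conc_def)
  then show ?case using Cons by (auto intro: reg_conc reg_letter)
qed

lemma regular_lang_UN: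
  "finite I \<Longrightarrow> (\<And>i. i \<in> I \<Longrightarrow> X i \<in> regular_lang S) \<Longrightarrow> (\<Union>i\<in>I. X i) \<in> regular_lang S"
  by (induction rule: finite_induct) (auto intro: reg_empty reg_union)

lemma block_arith_prog:
  "(\<lambda>n. a @ word_pow c n @ b) ` arith_prog \<alpha> \<beta>
    = lang_conc {a @ word_pow c \<alpha>} (lang_conc (lang_star {word_pow c \<beta>}) {b})"
proof -
  have pow_eq:
    "a @ word_pow c (\<alpha> + t * \<beta>) @ b = (a @ word_pow c \<alpha>) @ word_pow (word_pow c \<beta>) t @ b" for t
    by (simp add: word_pow_add word_pow_mult)
  have "(\<lambda>n. a @ word_pow c n @ b) ` arith_prog \<alpha> \<beta>
      = range (\<lambda>t. (a @ word_pow c \<alpha>) @ word_pow (word_pow c \<beta>) t @ b)"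
    unfolding arith_prog_def pow_eq[symmetric] by auto
  also have "\<dots> = lang_conc {a @ word_pow c \<alpha>} (lang_conc (lang_star {word_pow c \<beta>}) {b})"
    unfolding lang_conc_def lang_star_singleton by auto
  finally show ?thesis .
qed

lemma regular_lang_block:
  assumes "a \<in> lists S" "b \<in> lists S" "c \<in> lists S" and "fin_union_aps N"
  shows "(\<lambda>n. a @ word_pow c n @ b) ` N \<in> regular_lang S"
proof -
  from \<open>fin_union_aps N\<close> obtain F P where
    "finite F" "finite P" "N = F \<union> (\<Union>(\<alpha>, \<beta>)\<in>P. arith_prog \<alpha> \<beta>)"
    unfolding fin_union_aps_def by blast
  then have "(\<lambda>n. a @ word_pow c n @ b) ` N = (\<Union>n\<in>F. {a @ word_pow c n @ b})
      \<union> (\<Union>(\<alpha>, \<beta>)\<in>P. lang_conc {a @ word_pow c \<alpha>} (lang_conc (lang_star {word_pow c \<beta>}) {b}))"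
    by (auto simp flip: block_arith_prog)
  also have "\<dots> \<in> regular_lang S"
    using assms \<open>finite F\<close> \<open>finite P\<close>
    by (intro reg_union regular_lang_UN)
      (auto intro!: reg_conc reg_star regular_lang_singleton simp: word_pow_def)
  finally show ?thesis .
qed

theorem proposition2p2:
  fixes S :: "'a set" and U V W L :: "'a list set"
  assumes "finite S"
    and "finite U" and "finite V" and "finite W"
    and "U \<subseteq> lists S" and "V \<subseteq> lists S" and "W \<subseteq> lists S"
    and "L \<subseteq> lists S"
    and "\<forall>w\<in>L. \<exists>a\<in>U. \<exists>b\<in>V. \<exists>c\<in>W. \<exists>n. w = a @ word_pow c n @ b"
  shows "L \<in> regular_lang S \<longleftrightarrow>
    (\<forall>a\<in>U. \<forall>b\<in>V. \<forall>c\<in>W. fin_union_aps {n. a @ word_pow c n @ b \<in> L})"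
proof
  assume "L \<in> regular_lang S"
  then show "\<forall>a\<in>U. \<forall>b\<in>V. \<forall>c\<in>W. fin_union_aps {n. a @ word_pow c n @ b \<in> L}"
    by (blast intro: fin_union_aps_if_finite_lquots finite_lquots_if_regular)
next
  assume blocks: "\<forall>a\<in>U. \<forall>b\<in>V. \<forall>c\<in>W. fin_union_aps {n. a @ word_pow c n @ b \<in> L}"
  define block where
    "block = (\<lambda>(a, b, c). (\<lambda>n. a @ word_pow c n @ b) ` {n. a @ word_pow c n @ b \<in> L})"
  have "L = (\<Union>x\<in>U \<times> V \<times> W. block x)"
    using assms(9) by (fastforce simp: block_def)
  also have "\<dots> \<in> regular_lang S"
    using assms(2-7) blocks
    by (intro regular_lang_UN) (auto simp: block_def intro!: regular_lang_block)
  finally show "L \<in> regular_lang S" .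
qed

end
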